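(* Let $X$ be a Banach space as described in the context and let $f\in X$ be a function that is not a polynomial. If there exists a sequence $p_n\in\mathcal{P}_n[\mathbb{Z}]$ with $\lim_{n\to\infty}\|f-p_n\|=0$, then $\liminf_{n\to\infty}\|z^n\|=0$.
   Context: $\mathbb{D}=\{z\in\mathbb{C}:|z|<1\}$. $X$ is a complex Banach space of functions analytic in $\mathbb{D}$ whose norm $\|\cdot\|$ satisfies: (i) $\|f(\cdot\, e^{it})\|=\|f(\cdot)\|$ for all $t\in\mathbb{R}$ and $f\in X$; (ii) $\|f\|<\infty$ for every entire function $f$; (iii) for all $f\in X$ and $g\in L[0,2\pi]$, $\big\|\frac{1}{2\pi}\int_0^{2\pi} f(ze^{it})g(t)\,dt\big\|\le \frac{1}{2\pi}\int_0^{2\pi}|g(t)|\,dt\cdot\|f\|$. $\|z^n\|$ is the norm in $X$ of $z\mapsto z^n$. A complex number is called an integer if its real and imaginary parts are integers; $\mathcal{P}_n[\mathbb{Z}]$ is the set of complex polynomials of degree at most $n-1$ with integer coefficients in this sense. *)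

theory Defs
  imports "HOL-Analysis.Analysis" "HOL-Computational_Algebra.Polynomial"
begin

text \<open>Functions analytic in the unit disc are represented by functions
  complex \<Rightarrow> complex that vanish outside the open unit disc.\<close>

definition restrict_D :: "(complex \<Rightarrow> complex) \<Rightarrow> complex \<Rightarrow> complex" where
  "restrict_D f = (\<lambda>z. if z \<in> ball 0 1 then f z else 0)"

definition gauss_int :: "complex \<Rightarrow> bool" where
  "gauss_int c \<longleftrightarrow> Re c \<in> \<int> \<and> Im c \<in> \<int>"

definition int_polys :: "nat \<Rightarrow> complex poly set" where
  "int_polys n = {q. (\<forall>i. gauss_int (coeff q i)) \<and> (q = 0 \<or> degree q < n)}"

definition admissible_space :: "(complex \<Rightarrow> complex) set \<Rightarrow> ((complex \<Rightarrow> complex) \<Rightarrow> real) \<Rightarrow> bool" where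
  "admissible_space X N \<longleftrightarrow>
     \<comment> \<open>elements: analytic in the disc, represented as vanishing outside it\<close>
     (\<forall>f\<in>X. f holomorphic_on ball 0 1 \<and> (\<forall>z. z \<notin> ball 0 1 \<longrightarrow> f z = 0)) \<and>
     \<comment> \<open>complex vector space\<close>
     (\<lambda>z. 0) \<in> X \<and> (\<forall>f\<in>X. \<forall>g\<in>X. (\<lambda>z. f z + g z) \<in> X) \<and> (\<forall>c. \<forall>f\<in>X. (\<lambda>z. c * f z) \<in> X) \<and>
     \<comment> \<open>norm\<close>
     (\<forall>f\<in>X. N f \<ge> 0) \<and> (\<forall>f\<in>X. N f = 0 \<longleftrightarrow> f = (\<lambda>z. 0)) \<and>
     (\<forall>c. \<forall>f\<in>X. N (\<lambda>z. c * f z) = cmod c * N f) \<and>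
     (\<forall>f\<in>X. \<forall>g\<in>X. N (\<lambda>z. f z + g z) \<le> N f + N g) \<and>
     \<comment> \<open>completeness\<close>
     (\<forall>F. (\<forall>n. F n \<in> X) \<longrightarrow>
          (\<forall>e>0. \<exists>M. \<forall>m\<ge>M. \<forall>n\<ge>M. N (\<lambda>z. F m z - F n z) < e) \<longrightarrow>
          (\<exists>f\<in>X. (\<lambda>n. N (\<lambda>z. F n z - f z)) \<longlonglongrightarrow> 0)) \<and>
     \<comment> \<open>(i) rotation invariance\<close>
     (\<forall>f\<in>X. \<forall>t::real. (\<lambda>z. f (z * cis t)) \<in> X \<and> N (\<lambda>z. f (z * cis t)) = N f) \<and>
     \<comment> \<open>(ii) entire functions belong to X (have finite norm)\<close>
     (\<forall>f. f holomorphic_on UNIV \<longrightarrow> restrict_D f \<in> X) \<and>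
     \<comment> \<open>(iii) convolution estimate\<close>
     (\<forall>f\<in>X. \<forall>g :: real \<Rightarrow> complex. set_integrable lborel {0..2*pi} g \<longrightarrow>
        (let h = restrict_D (\<lambda>z. (1 / (2*pi)) * (LINT t:{0..2*pi}|lborel. f (z * cis t) * g t))
         in h \<in> X \<and> N h \<le> (1 / (2*pi)) * (LINT t:{0..2*pi}|lborel. cmod (g t)) * N f))"

end

theory Submission
  imports Defs
begin

text \<open>Averaging \<open>r(z e^(it)) e^(-ikt)\<close> over the circle isolates the monomial \<open>c_k z^k\<close> of
  a polynomial \<open>r\<close>, so the convolution estimate (iii) gives \<open>|c_k| \<parallel>z^k\<parallel> \<le> \<parallel>r\<parallel>\<close>. If the
  lim inf of \<open>\<parallel>z^n\<parallel>\<close> were positive, all \<open>\<parallel>z^k\<parallel>\<close> would be bounded below by some \<open>\<delta> > 0\<close>, and a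
  polynomial with Gaussian-integer coefficients and norm below \<open>\<delta>\<close> would vanish. The
  approximating polynomials form a Cauchy sequence, so they are eventually constant and \<open>f\<close> is a
  polynomial.\<close>

lemma cis_int_has_integral:
  fixes m :: int
  shows "((\<lambda>t. cis (of_int m * t)) has_integral (if m = 0 then 2*pi else 0)) {0..2*pi}"
proof (cases "m = 0")
  case True
  then show ?thesis
    using has_integral_const[of "1::complex" 0 "2*pi"] by (simp add: scaleR_conv_of_real)
next
  case False
  have antiderivative:
    "((\<lambda>t. cis (of_int m * t) / (\<i> * of_int m)) has_vector_derivative cis (of_int m * t))
       (at t within {0..2*pi})" for t
  proof -
    have "((\<lambda>w. exp (\<i> * of_int m * w)) has_field_derivative
            (\<i> * of_int m * exp (\<i> * of_int m * of_real t))) (at (of_real t))"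
      by (auto intro!: derivative_eq_intros)
    from has_vector_derivative_real_field[OF this]
    have "((\<lambda>t. cis (of_int m * t)) has_vector_derivative (\<i> * of_int m * cis (of_int m * t)))
            (at t within {0..2*pi})"
      by (simp add: cis_conv_exp mult.assoc)
    then have "((\<lambda>t. cis (of_int m * t) / (\<i> * of_int m)) has_vector_derivative
                 (\<i> * of_int m * cis (of_int m * t)) / (\<i> * of_int m)) (at t within {0..2*pi})"
      by (intro derivative_eq_intros) auto
    then show ?thesis using False by simp
  qed
  have "((\<lambda>t. cis (of_int m * t)) has_integral
          (cis (of_int m * (2*pi)) / (\<i> * of_int m) - cis (of_int m * 0) / (\<i> * of_int m))) {0..2*pi}"
    by (rule fundamental_theorem_of_calculus) (use antiderivative in auto)
  moreover have "cis (of_int m * (2*pi)) = 1"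
    using cis_multiple_2pi[of "of_int m"] by (simp add: mult.commute mult.left_commute)
  ultimately show ?thesis using False by simp
qed

lemma poly_cis_times_cis_has_integral:
  fixes r :: "complex poly"
  shows "((\<lambda>t. poly r (z * cis t) * cis (- (real k * t))) has_integral (2*pi * (coeff r k * z^k)))
           {0..2*pi}"
proof -
  have expand: "poly r (z * cis t) * cis (- (real k * t)) =
      (\<Sum>i\<le>degree r. (coeff r i * z^i) * cis (of_int (int i - int k) * t))" for t
  proof -
    have "(z * cis t)^i * cis (- (real k * t)) = z^i * cis (of_int (int i - int k) * t)" for i
    proof -
      have "(z * cis t)^i * cis (- (real k * t)) = z^i * (cis (real i * t) * cis (- (real k * t)))"
        by (simp add: power_mult_distrib Complex.DeMoivre)
      also have "\<dots> = z^i * cis (of_int (int i - int k) * t)"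
        by (simp add: cis_mult algebra_simps)
      finally show ?thesis .
    qed
    then show ?thesis
      by (simp add: poly_altdef sum_distrib_right mult.assoc)
  qed
  have "((\<lambda>t. \<Sum>i\<le>degree r. (coeff r i * z^i) * cis (of_int (int i - int k) * t)) has_integral
        (\<Sum>i\<le>degree r. (coeff r i * z^i) * (if int i - int k = 0 then 2*pi else 0))) {0..2*pi}"
    by (intro has_integral_sum finite_atMost ballI has_integral_mult_right cis_int_has_integral)
  moreover have "(\<Sum>i\<le>degree r. (coeff r i * z^i) *
                   complex_of_real (if int i - int k = 0 then 2*pi else 0)) = 2*pi * (coeff r k * z^k)"
  proof (cases "k \<le> degree r")
    case True
    have "(\<Sum>i\<le>degree r. (coeff r i * z^i) * complex_of_real (if int i - int k = 0 then 2*pi else 0))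
        = (\<Sum>i\<le>degree r. if i = k then (coeff r i * z^i) * (2*pi) else 0)"
      by (intro sum.cong) auto
    then show ?thesis using True by (simp add: sum.delta)
  next
    case False
    then show ?thesis by (simp add: coeff_eq_0)
  qed
  ultimately show ?thesis unfolding expand by simp
qed

lemma gauss_int_norm_less1_eq_0:
  assumes "gauss_int c" "cmod c < 1"
  shows "c = 0"
proof -
  have "\<bar>Re c\<bar> < 1" "\<bar>Im c\<bar> < 1"
    using assms(2) abs_Re_le_cmod[of c] abs_Im_le_cmod[of c] by linarith+
  with assms(1) have "Re c = 0" "Im c = 0"
    unfolding gauss_int_def by (auto intro: Ints_nonzero_abs_less1)
  then show ?thesis by (simp add: complex_eq_iff)
qed

lemma gauss_int_diff: "gauss_int a \<Longrightarrow> gauss_int b \<Longrightarrow> gauss_int (a - b)"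
  unfolding gauss_int_def by auto

lemma liminf_pos_imp_uniform_lower_bound:
  fixes a :: "nat \<Rightarrow> real"
  assumes pos: "\<And>n. a n > 0" and "liminf (\<lambda>n. ereal (a n)) > 0"
  obtains \<delta> where "\<delta> > 0" "\<And>n. \<delta> \<le> a n"
proof -
  obtain e where "0 < e" and e: "ereal e < liminf (\<lambda>n. ereal (a n))"
    using ereal_dense2[OF assms(2)] by auto
  from less_LiminfD[OF e]
  obtain K where K: "\<And>n. n \<ge> K \<Longrightarrow> e < a n"
    unfolding eventually_sequentially by auto
  define S where "S = insert e (a ` {..<K})"
  have "finite S" "S \<noteq> {}" unfolding S_def by auto
  show thesis
  proof
    show "Min S > 0"
      using \<open>finite S\<close> \<open>S \<noteq> {}\<close> \<open>0 < e\<close> pos unfolding S_def by auto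
    show "Min S \<le> a n" for n
    proof (cases "n < K")
      case True
      then show ?thesis using \<open>finite S\<close> unfolding S_def by (intro Min_le) auto
    next
      case False
      have "Min S \<le> e" using \<open>finite S\<close> unfolding S_def by (intro Min_le) auto
      then show ?thesis using K[of n] False by simp
    qed
  qed
qed

lemma continuous_on_imp_set_integrable:
  fixes g :: "real \<Rightarrow> complex"
  assumes "continuous_on {a..b} g"
  shows "set_integrable lborel {a..b} g"
  unfolding set_integrable_def by (rule borel_integrable_compact) (use assms in auto)

locale admissible_function_space =
  fixes X :: "(complex \<Rightarrow> complex) set" and N :: "(complex \<Rightarrow> complex) \<Rightarrow> real"
  assumes admissible: "admissible_space X N"
begin

lemma norm_nonneg: "f \<in> X \<Longrightarrow> N f \<ge> 0"
  using admissible unfolding admissible_space_def by (elim conjE) simp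

lemma norm_eq_zero_iff: "f \<in> X \<Longrightarrow> N f = 0 \<longleftrightarrow> f = (\<lambda>z. 0)"
  using admissible unfolding admissible_space_def by (elim conjE) simp

lemma norm_scale: "f \<in> X \<Longrightarrow> N (\<lambda>z. c * f z) = cmod c * N f"
  using admissible unfolding admissible_space_def by (elim conjE) simp

lemma scale_closed: "f \<in> X \<Longrightarrow> (\<lambda>z. c * f z) \<in> X"
  using admissible unfolding admissible_space_def by (elim conjE) simp

lemma add_closed: "f \<in> X \<Longrightarrow> g \<in> X \<Longrightarrow> (\<lambda>z. f z + g z) \<in> X"
  using admissible unfolding admissible_space_def by (elim conjE) simp

lemma norm_triangle: "f \<in> X \<Longrightarrow> g \<in> X \<Longrightarrow> N (\<lambda>z. f z + g z) \<le> N f + N g"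
  using admissible unfolding admissible_space_def by (elim conjE) simp

lemma restrict_D_entire_mem: "f holomorphic_on UNIV \<Longrightarrow> restrict_D f \<in> X"
  using admissible unfolding admissible_space_def by (elim conjE) simp

lemma convolution_norm_le:
  fixes g :: "real \<Rightarrow> complex"
  assumes "f \<in> X" "set_integrable lborel {0..2*pi} g"
  shows "N (restrict_D (\<lambda>z. (1 / (2*pi)) * (LINT t:{0..2*pi}|lborel. f (z * cis t) * g t)))
           \<le> (1 / (2*pi)) * (LINT t:{0..2*pi}|lborel. cmod (g t)) * N f"
  using admissible assms unfolding admissible_space_def Let_def by (elim conjE) simp

lemma diff_closed:
  assumes "f \<in> X" "g \<in> X"
  shows "(\<lambda>z. f z - g z) \<in> X"
  using add_closed[OF assms(1) scale_closed[OF assms(2), of "-1"]] by simp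

lemma norm_diff_le:
  assumes "f \<in> X" "g \<in> X"
  shows "N (\<lambda>z. f z - g z) \<le> N f + N g"
  using norm_triangle[OF assms(1) scale_closed[OF assms(2), of "-1"]]
    norm_scale[OF assms(2), of "-1"] by simp

lemma restrict_D_poly_mem: "restrict_D (poly r) \<in> X"
  by (rule restrict_D_entire_mem) (intro holomorphic_intros)

lemma restrict_D_power_mem: "restrict_D (\<lambda>z. z^k) \<in> X"
  by (rule restrict_D_entire_mem) (intro holomorphic_intros)

lemma norm_power_pos: "N (restrict_D (\<lambda>z. z^k)) > 0"
proof -
  have "restrict_D (\<lambda>z. z^k) (1/2) \<noteq> 0" unfolding restrict_D_def by simp
  then have "restrict_D (\<lambda>z. z^k) \<noteq> (\<lambda>z. 0)" by metis
  then show ?thesis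
    using norm_eq_zero_iff norm_nonneg restrict_D_power_mem by (metis order_less_le)
qed

lemma coeff_times_norm_power_le:
  "cmod (coeff r k) * N (restrict_D (\<lambda>z. z^k)) \<le> N (restrict_D (poly r))"
proof -
  define g where "g = (\<lambda>t::real. cis (- (real k * t)))"
  let ?h = "restrict_D (\<lambda>z. (1 / (2*pi)) *
              (LINT t:{0..2*pi}|lborel. restrict_D (poly r) (z * cis t) * g t))"
  have g_integrable: "set_integrable lborel {0..2*pi} g"
    unfolding g_def by (intro continuous_on_imp_set_integrable continuous_intros)
  have "(LINT t:{0..2*pi}|lborel. cmod (g t)) = 2*pi"
    unfolding g_def by (simp add: set_integral_const)
  then have "N ?h \<le> N (restrict_D (poly r))"
    using convolution_norm_le[OF restrict_D_poly_mem g_integrable] by simp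
  moreover have "?h = (\<lambda>z. coeff r k * restrict_D (\<lambda>z. z^k) z)"
  proof
    fix z
    show "?h z = coeff r k * restrict_D (\<lambda>z. z^k) z"
    proof (cases "z \<in> ball 0 1")
      case True
      then have "z * cis t \<in> ball 0 1" for t by (simp add: norm_mult)
      then have "(LINT t:{0..2*pi}|lborel. restrict_D (poly r) (z * cis t) * g t)
               = (LINT t:{0..2*pi}|lborel. poly r (z * cis t) * cis (- (real k * t)))"
        unfolding g_def restrict_D_def by simp
      also have "\<dots> = integral {0..2*pi} (\<lambda>t. poly r (z * cis t) * cis (- (real k * t)))"
        by (intro set_borel_integral_eq_integral continuous_on_imp_set_integrable continuous_intros)
      also have "\<dots> = 2*pi * (coeff r k * z^k)"
        by (rule integral_unique[OF poly_cis_times_cis_has_integral])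
      finally show ?thesis using True unfolding restrict_D_def by simp
    qed (simp add: restrict_D_def)
  qed
  ultimately show ?thesis
    using norm_scale[OF restrict_D_power_mem] by simp
qed

lemma gauss_int_poly_small_norm_eq_0:
  assumes "\<And>k. \<delta> \<le> N (restrict_D (\<lambda>z. z^k))"
    and "\<And>k. gauss_int (coeff r k)"
    and "N (restrict_D (poly r)) < \<delta>"
  shows "r = 0"
proof (rule poly_eqI)
  fix k
  have "cmod (coeff r k) * N (restrict_D (\<lambda>z. z^k)) < N (restrict_D (\<lambda>z. z^k))"
    using coeff_times_norm_power_le[of r k] assms(1,3) by (meson order.strict_trans1 order.strict_trans2)
  then have "cmod (coeff r k) < 1"
    using norm_power_pos[of k] by simp
  then show "coeff r k = coeff 0 k"
    using gauss_int_norm_less1_eq_0 assms(2) by simp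
qed

lemma limit_of_gauss_int_polys_is_poly:
  assumes "\<delta> > 0" "\<And>k. \<delta> \<le> N (restrict_D (\<lambda>z. z^k))"
    and "f \<in> X"
    and gauss: "\<And>n k. gauss_int (coeff (p n) k)"
    and lim: "(\<lambda>n. N (\<lambda>z. f z - restrict_D (poly (p n)) z)) \<longlonglongrightarrow> 0"
  shows "\<exists>q. f = restrict_D (poly q)"
proof -
  define A where "A n = (\<lambda>z. f z - restrict_D (poly (p n)) z)" for n
  have A_mem: "A n \<in> X" for n
    unfolding A_def using diff_closed[OF \<open>f \<in> X\<close> restrict_D_poly_mem] .
  have lim_A: "(\<lambda>n. N (A n)) \<longlonglongrightarrow> 0"
    using lim unfolding A_def .
  have "\<forall>\<^sub>F n in sequentially. N (A n) < \<delta>/2"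
    using order_tendstoD(2)[OF lim_A, of "\<delta>/2"] \<open>\<delta> > 0\<close> by simp
  then obtain M where M: "\<And>n. n \<ge> M \<Longrightarrow> N (A n) < \<delta>/2"
    unfolding eventually_sequentially by blast
  have "A n = A M" if "n \<ge> M" for n
  proof -
    have "restrict_D (poly (p n - p M)) = (\<lambda>z. A M z - A n z)"
      unfolding A_def restrict_D_def by (auto simp: poly_diff)
    then have "N (restrict_D (poly (p n - p M))) < \<delta>"
      using norm_diff_le[OF A_mem A_mem, of M n] M[of n] M[of M] that by simp
    moreover have "gauss_int (coeff (p n - p M) k)" for k
      by (simp add: gauss_int_diff gauss)
    ultimately have "p n - p M = 0"
      using gauss_int_poly_small_norm_eq_0[OF assms(2)] by blast
    then show ?thesis
      unfolding A_def by simp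
  qed
  then have "\<forall>\<^sub>F n in sequentially. N (A n) = N (A M)"
    unfolding eventually_sequentially by metis
  with lim_A have "(\<lambda>n. N (A M)) \<longlonglongrightarrow> 0"
    by (rule Lim_transform_eventually)
  then have "A M = (\<lambda>z. 0)"
    using norm_eq_zero_iff[OF A_mem] by (simp add: LIMSEQ_const_iff)
  then have "f = restrict_D (poly (p M))"
    unfolding A_def by (simp add: fun_eq_iff)
  then show ?thesis ..
qed

end

theorem theorem5p4:
  fixes X :: "(complex \<Rightarrow> complex) set" and N :: "(complex \<Rightarrow> complex) \<Rightarrow> real"
    and f :: "complex \<Rightarrow> complex" and p :: "nat \<Rightarrow> complex poly"
  assumes "admissible_space X N"
    and "f \<in> X"
    and "\<not> (\<exists>q. f = restrict_D (poly q))"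
    and "\<forall>n. p n \<in> int_polys n"
    and "(\<lambda>n. N (\<lambda>z. f z - restrict_D (poly (p n)) z)) \<longlonglongrightarrow> 0"
  shows "liminf (\<lambda>n. ereal (N (restrict_D (\<lambda>z. z ^ n)))) = 0"
proof (rule ccontr)
  interpret admissible_function_space X N by unfold_locales (rule assms(1))
  assume "liminf (\<lambda>n. ereal (N (restrict_D (\<lambda>z. z ^ n)))) \<noteq> 0"
  moreover have "liminf (\<lambda>n. ereal (N (restrict_D (\<lambda>z. z ^ n)))) \<ge> 0"
    by (intro Liminf_bounded always_eventually allI) (simp add: norm_nonneg restrict_D_power_mem)
  ultimately have "liminf (\<lambda>n. ereal (N (restrict_D (\<lambda>z. z ^ n)))) > 0"
    by simp
  then obtain \<delta> where \<delta>: "\<delta> > 0" "\<And>k. \<delta> \<le> N (restrict_D (\<lambda>z. z^k))"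
    using liminf_pos_imp_uniform_lower_bound[of "\<lambda>k. N (restrict_D (\<lambda>z. z^k))"] norm_power_pos
    by blast
  have gauss: "\<And>n k. gauss_int (coeff (p n) k)"
    using assms(4) unfolding int_polys_def by blast
  have "\<exists>q. f = restrict_D (poly q)"
    by (rule limit_of_gauss_int_polys_is_poly[OF \<delta> assms(2) gauss assms(5)])
  with assms(3) show False ..
qed

end
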